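(* Let $\sigma$ be a 2-structure and $X\subsetneq V(\sigma)$ with $\sigma[X]$ prime; write $\overline{X}=V(\sigma)\setminus X$ and $\Gamma=\Gamma_{(\sigma,\overline{X})}$. Suppose Statement (S3) holds (there is no $Y\subseteq\overline{X}$ with $|Y|=3$ and $\sigma[X\cup Y]$ prime). Let $B_q\in q_{(\sigma,\overline{X})}$. For each $v\in\overline{X}\setminus B_q$, the sets $N^+_v=\{x\in B_q:\{x,v\}\in E(\Gamma)\}$ and $N^-_v=\{x\in B_q:\{x,v\}\notin E(\Gamma)\}$ are modules of $\sigma[B_q]$. Moreover, if $N^+_v\neq\emptyset$ and $N^-_v\neq\emptyset$, then: (1) if $B_q=\langle X\rangle^{(e,f)}_\sigma$ with $e,f\in E(\sigma)$, then $(z,x)\in e$ and $(x,z)\in f$ for all $z\in N^-_v$, $x\in N^+_v$; (2) if $B_q=X^{(e,f)}_\sigma(\alpha)$ with $\alpha\in X$ and $e,f\in E(\sigma)$, then $(z,x)\in f$ and $(x,z)\in e$ for all $z\in N^-_v$, $x\in N^+_v$.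
   Context: A 2-structure $\sigma$ consists of a vertex set $V(\sigma)$ and an equivalence relation $\equiv_\sigma$ on ordered pairs of distinct vertices; $E(\sigma)$ is its set of classes; $\sigma[W]$ is the induced 2-structure on $W$. A module is a set $M$ such that for all $x,y\in M$ and $v\notin M$, $(x,v)\equiv_\sigma(y,v)$ and $(v,x)\equiv_\sigma(v,y)$; $\sigma$ is prime if $|V(\sigma)|\geq3$ and its only modules are $\emptyset$, $V(\sigma)$ and singletons. Given $\sigma[X]$ prime: ${\rm Ext}_\sigma(X)=\{v\in\overline{X}:\sigma[X\cup\{v\}]\text{ prime}\}$; $\langle X\rangle_\sigma=\{v\in\overline{X}: X\text{ is a module of }\sigma[X\cup\{v\}]\}$; for $\alpha\in X$, $X_\sigma(\alpha)=\{v\in\overline{X}:\{\alpha,v\}\text{ is a module of }\sigma[X\cup\{v\}]\}$. For $e,f\in E(\sigma)$: $\langle X\rangle^{(e,f)}_\sigma=\{v\in\langle X\rangle_\sigma:(v,\alpha)\in e,(\alpha,v)\in f\}$ for any $\alpha\in X$; $X^{(e,f)}_\sigma(\alpha)=\{v\in X_\sigma(\alpha):(v,\alpha)\in e,(\alpha,v)\in f\}$. $q_{(\sigma,\overline{X})}$ is the partition of $\overline{X}$ formed by the nonempty sets among ${\rm Ext}_\sigma(X)$, $\langle X\rangle^{(e,f)}_\sigma$, $X^{(e,f)}_\sigma(\alpha)$ ($e,f\in E(\sigma)$, $\alpha\in X$). The outside graph $\Gamma_{(\sigma,\overline{X})}$ has vertex set $\overline{X}$ and edges the 2-element sets $Y\subseteq\overline{X}$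 with $\sigma[X\cup Y]$ prime. *)

theory Defs
  imports Main
begin

definition offdiag :: "'a set \<Rightarrow> ('a \<times> 'a) set" where
  "offdiag V = {(x, y). x \<in> V \<and> y \<in> V \<and> x \<noteq> y}"

definition two_structure :: "'a set \<Rightarrow> (('a \<times> 'a) \<times> ('a \<times> 'a)) set \<Rightarrow> bool" where
  "two_structure V R \<longleftrightarrow> equiv (offdiag V) R"

definition classes :: "'a set \<Rightarrow> (('a \<times> 'a) \<times> ('a \<times> 'a)) set \<Rightarrow> ('a \<times> 'a) set set" where
  "classes V R = offdiag V // R"

text \<open>The relation of the induced 2-structure sigma[W] (its vertex set is W).\<close>
definition ind :: "(('a \<times> 'a) \<times> ('a \<times> 'a)) set \<Rightarrow> 'a set \<Rightarrow> (('a \<times> 'a) \<times> ('a \<times> 'a)) set" where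
  "ind R W = R \<inter> (offdiag W \<times> offdiag W)"

definition is_module :: "'a set \<Rightarrow> (('a \<times> 'a) \<times> ('a \<times> 'a)) set \<Rightarrow> 'a set \<Rightarrow> bool" where
  "is_module V R M \<longleftrightarrow> M \<subseteq> V \<and>
     (\<forall>x\<in>M. \<forall>y\<in>M. \<forall>v\<in>V - M. ((x, v), (y, v)) \<in> R \<and> ((v, x), (v, y)) \<in> R)"

definition is_prime :: "'a set \<Rightarrow> (('a \<times> 'a) \<times> ('a \<times> 'a)) set \<Rightarrow> bool" where
  "is_prime V R \<longleftrightarrow> (\<exists>a\<in>V. \<exists>b\<in>V. \<exists>c\<in>V. a \<noteq> b \<and> a \<noteq> c \<and> b \<noteq> c) \<and>
     (\<forall>M. is_module V R M \<longrightarrow> M = {} \<or> M = V \<or> (\<exists>x. M = {x}))"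

definition Ext :: "'a set \<Rightarrow> (('a \<times> 'a) \<times> ('a \<times> 'a)) set \<Rightarrow> 'a set \<Rightarrow> 'a set" where
  "Ext V R X = {v \<in> V - X. is_prime (X \<union> {v}) (ind R (X \<union> {v}))}"

definition angle :: "'a set \<Rightarrow> (('a \<times> 'a) \<times> ('a \<times> 'a)) set \<Rightarrow> 'a set \<Rightarrow> 'a set" where
  "angle V R X = {v \<in> V - X. is_module (X \<union> {v}) (ind R (X \<union> {v})) X}"

definition Xalpha :: "'a set \<Rightarrow> (('a \<times> 'a) \<times> ('a \<times> 'a)) set \<Rightarrow> 'a set \<Rightarrow> 'a \<Rightarrow> 'a set" where
  "Xalpha V R X \<alpha> = {v \<in> V - X. is_module (X \<union> {v}) (ind R (X \<union> {v})) {\<alpha>, v}}"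

text \<open>The sets with upper index (e,f); for angle, the choice of alpha in X is
  irrelevant since X is a module, we require it for all alpha in X.\<close>
definition angle_ef :: "'a set \<Rightarrow> (('a \<times> 'a) \<times> ('a \<times> 'a)) set \<Rightarrow> 'a set \<Rightarrow>
    ('a \<times> 'a) set \<Rightarrow> ('a \<times> 'a) set \<Rightarrow> 'a set" where
  "angle_ef V R X e f = {v \<in> angle V R X. \<forall>\<alpha>\<in>X. (v, \<alpha>) \<in> e \<and> (\<alpha>, v) \<in> f}"

definition Xalpha_ef :: "'a set \<Rightarrow> (('a \<times> 'a) \<times> ('a \<times> 'a)) set \<Rightarrow> 'a set \<Rightarrow> 'a \<Rightarrow>
    ('a \<times> 'a) set \<Rightarrow> ('a \<times> 'a) set \<Rightarrow> 'a set" where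
  "Xalpha_ef V R X \<alpha> e f = {v \<in> Xalpha V R X \<alpha>. (v, \<alpha>) \<in> e \<and> (\<alpha>, v) \<in> f}"

definition qpart :: "'a set \<Rightarrow> (('a \<times> 'a) \<times> ('a \<times> 'a)) set \<Rightarrow> 'a set \<Rightarrow> 'a set set" where
  "qpart V R X =
     ({Ext V R X}
      \<union> {angle_ef V R X e f | e f. e \<in> classes V R \<and> f \<in> classes V R}
      \<union> {Xalpha_ef V R X \<alpha> e f | \<alpha> e f. \<alpha> \<in> X \<and> e \<in> classes V R \<and> f \<in> classes V R})
     - {{}}"

definition gamma_edges :: "'a set \<Rightarrow> (('a \<times> 'a) \<times> ('a \<times> 'a)) set \<Rightarrow> 'a set \<Rightarrow> 'a set set" where
  "gamma_edges V R X = {Y. Y \<subseteq> V - X \<and> card Y = 2 \<and> is_prime (X \<union> Y) (ind R (X \<union> Y))}"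

definition Nplus :: "'a set \<Rightarrow> (('a \<times> 'a) \<times> ('a \<times> 'a)) set \<Rightarrow> 'a set \<Rightarrow> 'a set \<Rightarrow> 'a \<Rightarrow> 'a set" where
  "Nplus V R X B v = {x \<in> B. {x, v} \<in> gamma_edges V R X}"

definition Nminus :: "'a set \<Rightarrow> (('a \<times> 'a) \<times> ('a \<times> 'a)) set \<Rightarrow> 'a set \<Rightarrow> 'a set \<Rightarrow> 'a \<Rightarrow> 'a set" where
  "Nminus V R X B v = {x \<in> B. {x, v} \<notin> gamma_edges V R X}"

end

theory Submission
  imports Defs
begin

text \<open>Let z be a non-neighbour and x a neighbour of v in B. Since sigma[X + {x, v}] is prime
  but, by (S3), sigma[X + {x, v, z}] is not, either X + {x, v} is a module of the latter or z
  has a twin p in X + {x, v}. The twin p = x is impossible, as exchanging x and z would make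
  {z, v} an edge; p = v is impossible, as every block of q is closed under exchanging X-twins
  while v is not in B. The two remaining possibilities (X + {x, v} a module, or a twin p in X)
  contradict z in B when B = Ext(X), and otherwise fix the classes of (z, x) and (x, z) from the
  type of B; in X^(e,f)(alpha) the twin p must be alpha. Hence N^- x N^+ lies in a single class,
  and so does N^+ x N^-, which is exactly what makes N^- and N^+ modules of sigma[B].\<close>

definition twins :: "(('a \<times> 'a) \<times> ('a \<times> 'a)) set \<Rightarrow> 'a set \<Rightarrow> 'a \<Rightarrow> 'a \<Rightarrow> bool" where
  "twins R S a b \<longleftrightarrow> (\<forall>u\<in>S. ((a, u), (b, u)) \<in> R \<and> ((u, a), (u, b)) \<in> R)"

lemma two_structure_sym: "two_structure V R \<Longrightarrow> (p, q) \<in> R \<Longrightarrow> (q, p) \<in> R"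
  unfolding two_structure_def equiv_def by (blast dest: symD)

lemma two_structure_trans: "two_structure V R \<Longrightarrow> (p, q) \<in> R \<Longrightarrow> (q, r) \<in> R \<Longrightarrow> (p, r) \<in> R"
  unfolding two_structure_def equiv_def by (blast dest: transD)

lemma two_structure_refl:
  "two_structure V R \<Longrightarrow> a \<in> V \<Longrightarrow> b \<in> V \<Longrightarrow> a \<noteq> b \<Longrightarrow> ((a, b), (a, b)) \<in> R"
  unfolding two_structure_def equiv_def refl_on_def offdiag_def by blast

lemma classes_closed: "two_structure V R \<Longrightarrow> e \<in> classes V R \<Longrightarrow> p \<in> e \<Longrightarrow> (p, q) \<in> R \<Longrightarrow> q \<in> e"
  unfolding two_structure_def classes_def by (metis in_quotient_imp_closed)

lemma classes_rel: "two_structure V R \<Longrightarrow> e \<in> classes V R \<Longrightarrow> p \<in> e \<Longrightarrow> q \<in> e \<Longrightarrow> (p, q) \<in> R"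
  unfolding two_structure_def classes_def using in_quotient_imp_in_rel[of "offdiag V" R e p q] by blast

lemma twins_sym: "two_structure V R \<Longrightarrow> twins R S a b \<Longrightarrow> twins R S b a"
  unfolding twins_def by (blast intro: two_structure_sym)

lemma twins_trans: "two_structure V R \<Longrightarrow> twins R S a b \<Longrightarrow> twins R S b c \<Longrightarrow> twins R S a c"
  unfolding twins_def by (blast intro: two_structure_trans)

lemma twins_refl: "two_structure V R \<Longrightarrow> twins R S a b \<Longrightarrow> twins R S a a"
  by (meson twins_sym twins_trans)

lemma twins_mono: "twins R S a b \<Longrightarrow> S' \<subseteq> S \<Longrightarrow> twins R S' a b"
  unfolding twins_def by blast

lemma is_module_ind_iff:
  "is_module W (ind R W) M \<longleftrightarrow> M \<subseteq> W \<and> (\<forall>a\<in>M. \<forall>b\<in>M. twins R (W - M) a b)"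
  unfolding is_module_def ind_def offdiag_def twins_def by auto

lemma is_module_pair_iff:
  assumes "two_structure V R"
  shows "is_module W (ind R W) {a, b} \<longleftrightarrow> a \<in> W \<and> b \<in> W \<and> twins R (W - {a, b}) a b"
  unfolding is_module_ind_iff using twins_sym[OF assms] twins_refl[OF assms] by blast

lemma is_module_ind_Int:
  "is_module W (ind R W) M \<Longrightarrow> W' \<subseteq> W \<Longrightarrow> is_module W' (ind R W') (M \<inter> W')"
  unfolding is_module_ind_iff by (blast intro: twins_mono)

lemma uniform_cut_modules:
  assumes "N \<union> N' = B" "N \<inter> N' = {}"
    and uniform: "\<And>z z' x x'. z \<in> N \<Longrightarrow> z' \<in> N \<Longrightarrow> x \<in> N' \<Longrightarrow> x' \<in> N' \<Longrightarrow>
      ((z, x), (z', x')) \<in> R \<and> ((x, z), (x', z')) \<in> R"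
  shows "is_module B (ind R B) N" "is_module B (ind R B) N'"
proof -
  have "B - N = N'" "B - N' = N" using assms(1,2) by blast+
  then show "is_module B (ind R B) N" "is_module B (ind R B) N'"
    unfolding is_module_ind_iff twins_def using assms(1) uniform by auto
qed

lemma is_prime_three:
  "is_prime W (ind R W) \<Longrightarrow> \<exists>a\<in>W. \<exists>b\<in>W. \<exists>c\<in>W. a \<noteq> b \<and> a \<noteq> c \<and> b \<noteq> c"
  unfolding is_prime_def by blast

lemma is_prime_not_subset_pair:
  assumes "is_prime W (ind R W)"
  shows "\<not> W \<subseteq> {p, q}"
proof
  assume "W \<subseteq> {p, q}"
  moreover obtain a b c where "a \<in> W" "b \<in> W" "c \<in> W" "a \<noteq> b" "a \<noteq> c" "b \<noteq> c"
    using is_prime_three[OF assms] by blast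
  ultimately show False by blast
qed

lemma is_prime_moduleE:
  assumes "is_prime W (ind R W)" "is_module W (ind R W) M"
  obtains "M = {}" | "M = W" | x where "M = {x}"
  using assms unfolding is_prime_def by blast

definition class_preserving_bij ::
    "(('a \<times> 'a) \<times> ('a \<times> 'a)) set \<Rightarrow> 'a set \<Rightarrow> 'a set \<Rightarrow> ('a \<Rightarrow> 'a) \<Rightarrow> bool" where
  "class_preserving_bij R W W' g \<longleftrightarrow> bij_betw g W W' \<and>
     (\<forall>p\<in>W. \<forall>q\<in>W. p \<noteq> q \<longrightarrow> ((p, q), (g p, g q)) \<in> R)"

lemma class_preserving_bij_inv:
  assumes ts: "two_structure V R" and g: "class_preserving_bij R W W' g"
  shows "class_preserving_bij R W' W (the_inv_into W g)"
proof -
  have bij: "bij_betw g W W'" using g unfolding class_preserving_bij_def by blast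
  let ?h = "the_inv_into W g"
  have "((p, q), (?h p, ?h q)) \<in> R" if "p \<in> W'" "q \<in> W'" "p \<noteq> q" for p q
  proof -
    have "?h p \<in> W" "?h q \<in> W" "g (?h p) = p" "g (?h q) = q"
      using that bij by (auto simp: bij_betw_def the_inv_into_into f_the_inv_into_f)
    then show ?thesis
      using g that two_structure_sym[OF ts] unfolding class_preserving_bij_def by metis
  qed
  then show ?thesis
    using bij bij_betw_the_inv_into unfolding class_preserving_bij_def by blast
qed

lemma is_module_image:
  assumes ts: "two_structure V R" and g: "class_preserving_bij R W W' g"
    and M: "is_module W (ind R W) M"
  shows "is_module W' (ind R W') (g ` M)"
  unfolding is_module_ind_iff
proof (intro conjI ballI)
  have bij: "bij_betw g W W'" and pres: "\<And>p q. p \<in> W \<Longrightarrow> q \<in> W \<Longrightarrow> p \<noteq> q \<Longrightarrow> ((p, q), (g p, g q)) \<in> R"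
    using g unfolding class_preserving_bij_def by blast+
  have MW: "M \<subseteq> W" using M unfolding is_module_ind_iff by blast
  then show "g ` M \<subseteq> W'" using bij bij_betw_imp_surj_on by blast
  fix a' b' assume "a' \<in> g ` M" "b' \<in> g ` M"
  then obtain a b where ab: "a \<in> M" "b \<in> M" "a' = g a" "b' = g b" by blast
  show "twins R (W' - g ` M) a' b'"
    unfolding twins_def
  proof
    fix u' assume "u' \<in> W' - g ` M"
    then obtain u where u: "u \<in> W - M" "u' = g u"
      using bij unfolding bij_betw_def by blast
    have "twins R (W - M) a b" using M ab unfolding is_module_ind_iff by blast
    moreover have "a \<noteq> u" "b \<noteq> u" using ab u by blast+
    ultimately have "((a, u), (b, u)) \<in> R" "((u, a), (u, b)) \<in> R"
      and "((g a, g u), (a, u)) \<in> R" "((u', a'), (u, a)) \<in> R"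
      and "((b, u), (g b, g u)) \<in> R" "((u, b), (u', b')) \<in> R"
      using ab u MW pres two_structure_sym[OF ts] unfolding twins_def by blast+
    then show "((a', u'), (b', u')) \<in> R \<and> ((u', a'), (u', b')) \<in> R"
      using ab u two_structure_trans[OF ts] by metis
  qed
qed

lemma is_prime_image:
  assumes ts: "two_structure V R" and g: "class_preserving_bij R W W' g"
    and prime: "is_prime W (ind R W)"
  shows "is_prime W' (ind R W')"
proof -
  have bij: "bij_betw g W W'" using g unfolding class_preserving_bij_def by blast
  let ?h = "the_inv_into W g"
  have "\<exists>a\<in>W'. \<exists>b\<in>W'. \<exists>c\<in>W'. a \<noteq> b \<and> a \<noteq> c \<and> b \<noteq> c"
    using is_prime_three[OF prime] bij unfolding bij_betw_def inj_on_def by blast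
  moreover have "M' = {} \<or> M' = W' \<or> (\<exists>x. M' = {x})" if M': "is_module W' (ind R W') M'" for M'
  proof -
    have "is_module W (ind R W) (?h ` M')"
      using is_module_image[OF ts class_preserving_bij_inv[OF ts g] M'] .
    then have "?h ` M' = {} \<or> ?h ` M' = W \<or> (\<exists>x. ?h ` M' = {x})"
      using prime unfolding is_prime_def by blast
    moreover have "M' = g ` ?h ` M'"
      using M' bij unfolding is_module_ind_iff
      by (force simp: bij_betw_def f_the_inv_into_f image_image)
    ultimately show ?thesis
      using bij by (metis bij_betw_imp_surj_on image_empty image_insert)
  qed
  ultimately show ?thesis unfolding is_prime_def by blast
qed

lemma twins_swap:
  assumes ts: "two_structure V R" and S: "S \<subseteq> V" and z: "z \<in> V - S" and v: "v \<in> V - S"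
    and tw: "twins R S z v"
  shows "class_preserving_bij R (insert z S) (insert v S) (\<lambda>u. if u = z then v else u)"
proof -
  let ?g = "\<lambda>u. if u = z then v else u"
  have "bij_betw ?g (insert z S) (insert v S)"
    using z v by (auto simp: bij_betw_def inj_on_def)
  moreover have "((p, q), (?g p, ?g q)) \<in> R"
    if "p \<in> insert z S" "q \<in> insert z S" "p \<noteq> q" for p q
    using that tw S z unfolding twins_def by (auto intro: two_structure_refl[OF ts])
  ultimately show ?thesis unfolding class_preserving_bij_def by blast
qed

lemma is_prime_insert_iff:
  assumes prime: "is_prime P (ind R P)" and z: "z \<notin> P"
  shows "is_prime (insert z P) (ind R (insert z P)) \<longleftrightarrow>
    \<not> is_module (insert z P) (ind R (insert z P)) P \<and>
    (\<forall>p\<in>P. \<not> is_module (insert z P) (ind R (insert z P)) {p, z})"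
proof
  assume "is_prime (insert z P) (ind R (insert z P))"
  moreover have "P \<noteq> {} \<and> P \<noteq> insert z P \<and> (\<forall>x. P \<noteq> {x})"
    using is_prime_not_subset_pair[OF prime] z by blast
  moreover have "{p, z} \<noteq> insert z P \<and> (\<forall>x. {p, z} \<noteq> {x})" if "p \<in> P" for p
    using is_prime_not_subset_pair[OF prime, of p z] z that by blast
  ultimately show "\<not> is_module (insert z P) (ind R (insert z P)) P \<and>
    (\<forall>p\<in>P. \<not> is_module (insert z P) (ind R (insert z P)) {p, z})"
    unfolding is_prime_def by blast
next
  assume no_module: "\<not> is_module (insert z P) (ind R (insert z P)) P \<and>
    (\<forall>p\<in>P. \<not> is_module (insert z P) (ind R (insert z P)) {p, z})"
  have "M = {} \<or> M = insert z P \<or> (\<exists>x. M = {x})"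
    if M: "is_module (insert z P) (ind R (insert z P)) M" for M
  proof -
    have M_sub: "M \<subseteq> insert z P" using M unfolding is_module_ind_iff by blast
    have "is_module P (ind R P) (M \<inter> P)" using is_module_ind_Int[OF M] by blast
    with prime show ?thesis
    proof (cases rule: is_prime_moduleE)
      case 1
      then show ?thesis using M_sub by blast
    next
      case 2
      then have "M = P \<or> M = insert z P" using M_sub by blast
      then show ?thesis using M no_module by blast
    next
      case (3 p)
      then have "M = {p} \<or> M = {p, z}" using M_sub by blast
      then show ?thesis using M no_module 3 by blast
    qed
  qed
  moreover have "\<exists>a\<in>insert z P. \<exists>b\<in>insert z P. \<exists>c\<in>insert z P. a \<noteq> b \<and> a \<noteq> c \<and> b \<noteq> c"
    using is_prime_three[OF prime] by blast
  ultimately show "is_prime (insert z P) (ind R (insert z P))"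
    unfolding is_prime_def by blast
qed

lemma module_excludes_pair_module:
  assumes ts: "two_structure V R" and prime: "is_prime X (ind R X)" and z: "z \<notin> X" and p: "p \<in> X"
    and X_module: "is_module (insert z X) (ind R (insert z X)) X"
    and pair_module: "is_module (insert z X) (ind R (insert z X)) {p, z}"
  shows False
proof -
  have "insert z X - X = {z}" using z by auto
  then have uniform: "twins R {z} a b" if "a \<in> X" "b \<in> X" for a b
    using X_module that unfolding is_module_ind_iff by auto
  have "insert z X - {p, z} = X - {p}" using z by auto
  then have twin: "twins R (X - {p}) p z"
    using pair_module unfolding is_module_pair_iff[OF ts] by auto
  have "twins R {p} a b" if "a \<in> X - {p}" "b \<in> X - {p}" for a b
  proof -
    have ap_az: "((a, p), (a, z)) \<in> R" and pa_za: "((p, a), (z, a)) \<in> R"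
      and bz_bp: "((b, z), (b, p)) \<in> R" and zb_pb: "((z, b), (p, b)) \<in> R"
      using twin that two_structure_sym[OF ts] unfolding twins_def by auto
    have az_bz: "((a, z), (b, z)) \<in> R" and za_zb: "((z, a), (z, b)) \<in> R"
      using uniform that unfolding twins_def by auto
    show ?thesis
      unfolding twins_def using two_structure_trans[OF ts] ap_az az_bz bz_bp pa_za za_zb zb_pb
      by (metis singletonD)
  qed
  moreover have "X - (X - {p}) = {p}" using p by blast
  ultimately have module: "is_module X (ind R X) (X - {p})"
    unfolding is_module_ind_iff by simp
  show False
    using prime module
  proof (cases rule: is_prime_moduleE)
    case 1
    then show False using is_prime_not_subset_pair[OF prime, of p p] by blast
  next
    case 2
    then show False using p by blast
  next
    case (3 x)
    then show False using is_prime_not_subset_pair[OF prime, of p x] by blast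
  qed
qed

lemma pair_module_unique:
  assumes ts: "two_structure V R" and prime: "is_prime X (ind R X)" and z: "z \<notin> X"
    and p: "p \<in> X" "is_module (insert z X) (ind R (insert z X)) {p, z}"
    and q: "q \<in> X" "is_module (insert z X) (ind R (insert z X)) {q, z}"
  shows "p = q"
proof (rule ccontr)
  assume pq: "p \<noteq> q"
  have "insert z X - {p, z} = X - {p}" "insert z X - {q, z} = X - {q}" using z by auto
  then have "twins R (X - {p}) p z" "twins R (X - {q}) q z"
    using p q unfolding is_module_pair_iff[OF ts] by auto
  moreover have "X - {p, q} \<subseteq> X - {p}" "X - {p, q} \<subseteq> X - {q}" by blast+
  ultimately have "twins R (X - {p, q}) p z" "twins R (X - {p, q}) q z"
    by (blast intro: twins_mono)+
  then have "twins R (X - {p, q}) p q"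
    using twins_sym[OF ts] twins_trans[OF ts] by blast
  then have module: "is_module X (ind R X) {p, q}"
    unfolding is_module_pair_iff[OF ts] using p q by blast
  show False
    using prime module
  proof (cases rule: is_prime_moduleE)
    case 2
    then show False using is_prime_not_subset_pair[OF prime, of p q] by blast
  qed (use pq in \<open>auto simp: doubleton_eq_iff\<close>)
qed

lemma gamma_edges_pair_iff:
  "{a, b} \<in> gamma_edges V R X \<longleftrightarrow>
    a \<in> V - X \<and> b \<in> V - X \<and> a \<noteq> b \<and> is_prime (insert a (insert b X)) (ind R (insert a (insert b X)))"
  unfolding gamma_edges_def by (cases "a = b") auto

lemma qpart_cases:
  assumes "B \<in> qpart V R X"
  obtains (Ext) "B = Ext V R X"
  | (angle) e f where "e \<in> classes V R" "f \<in> classes V R" "B = angle_ef V R X e f"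
  | (Xalpha) \<alpha> e f where "\<alpha> \<in> X" "e \<in> classes V R" "f \<in> classes V R" "B = Xalpha_ef V R X \<alpha> e f"
  using assms unfolding qpart_def by blast

lemma qpart_subset: "B \<in> qpart V R X \<Longrightarrow> B \<subseteq> V - X"
  by (elim qpart_cases) (auto simp: Ext_def angle_ef_def angle_def Xalpha_ef_def Xalpha_def)

context
  fixes V R X z v
  assumes ts: "two_structure V R" and X_subset: "X \<subseteq> V" and z: "z \<in> V - X" and v: "v \<in> V - X"
    and tw: "twins R X z v"
begin

private lemma swap: "class_preserving_bij R (insert z X) (insert v X) (\<lambda>u. if u = z then v else u)"
  using twins_swap[OF ts X_subset z v tw] .

lemma Ext_twin_closed: "z \<in> Ext V R X \<Longrightarrow> v \<in> Ext V R X"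
  using is_prime_image[OF ts swap] v unfolding Ext_def by auto

lemma angle_ef_twin_closed:
  assumes e: "e \<in> classes V R" and f: "f \<in> classes V R" and z_in: "z \<in> angle_ef V R X e f"
  shows "v \<in> angle_ef V R X e f"
proof -
  have "(\<lambda>u. if u = z then v else u) ` X = X" using z by auto
  then have "is_module (insert v X) (ind R (insert v X)) X"
    using is_module_image[OF ts swap, of X] z_in unfolding angle_ef_def angle_def by auto
  moreover have "(v, \<alpha>) \<in> e \<and> (\<alpha>, v) \<in> f" if "\<alpha> \<in> X" for \<alpha>
    using z_in that tw classes_closed[OF ts e] classes_closed[OF ts f]
    unfolding angle_ef_def twins_def by blast
  ultimately show ?thesis using v unfolding angle_ef_def angle_def by auto
qed

lemma Xalpha_ef_twin_closed:
  assumes \<alpha>: "\<alpha> \<in> X" and e: "e \<in> classes V R" and f: "f \<in> classes V R"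
    and z_in: "z \<in> Xalpha_ef V R X \<alpha> e f"
  shows "v \<in> Xalpha_ef V R X \<alpha> e f"
proof -
  have "(\<lambda>u. if u = z then v else u) ` {\<alpha>, z} = {\<alpha>, v}" using z \<alpha> by auto
  then have "is_module (insert v X) (ind R (insert v X)) {\<alpha>, v}"
    using is_module_image[OF ts swap, of "{\<alpha>, z}"] z_in unfolding Xalpha_ef_def Xalpha_def by auto
  moreover have "(v, \<alpha>) \<in> e" "(\<alpha>, v) \<in> f"
    using z_in \<alpha> tw classes_closed[OF ts e] classes_closed[OF ts f]
    unfolding Xalpha_ef_def twins_def by blast+
  ultimately show ?thesis using v unfolding Xalpha_ef_def Xalpha_def by auto
qed

end

locale no_prime_triple_extension =
  fixes V :: "'a set" and R :: "(('a \<times> 'a) \<times> ('a \<times> 'a)) set" and X :: "'a set"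
  assumes two_structure: "two_structure V R"
    and X_subset: "X \<subseteq> V"
    and X_prime: "is_prime X (ind R X)"
    and no_prime_triple: "\<not> (\<exists>Y. Y \<subseteq> V - X \<and> card Y = 3 \<and> is_prime (X \<union> Y) (ind R (X \<union> Y)))"
begin

lemma non_edge_cases [consumes 4]:
  assumes edge: "{x, v} \<in> gamma_edges V R X" and non_edge: "{z, v} \<notin> gamma_edges V R X"
    and z: "z \<in> V - X" "z \<noteq> v"
  obtains (X_module) "is_module (insert z X) (ind R (insert z X)) X" "\<forall>a\<in>X. twins R {z} a x"
  | (pair_module) p where "p \<in> X" "is_module (insert z X) (ind R (insert z X)) {p, z}" "twins R {x} p z"
  | (twin) "twins R X z v"
proof -
  let ?P = "insert x (insert v X)"
  have x: "x \<in> V - X" and v: "v \<in> V - X" and "x \<noteq> v" and P_prime: "is_prime ?P (ind R ?P)"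
    using edge unfolding gamma_edges_pair_iff by blast+
  have "x \<noteq> z" using edge non_edge by blast
  then have z_P: "z \<notin> ?P" using z by blast
  have "\<not> is_prime (insert z ?P) (ind R (insert z ?P))"
  proof
    assume "is_prime (insert z ?P) (ind R (insert z ?P))"
    moreover have "{x, z, v} \<subseteq> V - X" "card {x, z, v} = 3" "X \<union> {x, z, v} = insert z ?P"
      using x v z \<open>x \<noteq> v\<close> \<open>x \<noteq> z\<close> by auto
    ultimately show False using no_prime_triple by metis
  qed
  then consider "is_module (insert z ?P) (ind R (insert z ?P)) ?P"
    | p where "p \<in> ?P" "is_module (insert z ?P) (ind R (insert z ?P)) {p, z}"
    using is_prime_insert_iff[OF P_prime z_P] by blast
  then show thesis
  proof cases
    case 1
    have "?P \<inter> insert z X = X" "insert z ?P - ?P = {z}" using x v z_P by auto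
    then show thesis
      using X_module is_module_ind_Int[OF 1, of "insert z X"] 1 unfolding is_module_ind_iff by auto
  next
    case (2 p)
    then have twin_pz: "twins R (insert z ?P - {p, z}) p z"
      unfolding is_module_pair_iff[OF two_structure] by blast
    consider "p \<in> X" | "p = v" | "p = x" using 2 by blast
    then show thesis
    proof cases
      case 1
      have "insert z X \<subseteq> insert z ?P" "{p, z} \<inter> insert z X = {p, z}" using 1 by auto
      then have "is_module (insert z X) (ind R (insert z X)) {p, z}"
        using is_module_ind_Int[OF 2(2), of "insert z X"] by simp
      moreover have "{x} \<subseteq> insert z ?P - {p, z}" using 1 x \<open>x \<noteq> z\<close> by auto
      then have "twins R {x} p z" by (rule twins_mono[OF twin_pz])
      ultimately show thesis using pair_module 1 by blast
    next
      case 2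
      have "X \<subseteq> insert z ?P - {p, z}" using 2 v z by auto
      then show thesis
        using twin twins_mono[OF twin_pz] twins_sym[OF two_structure] 2 by blast
    next
      case 3
      have "insert z ?P - {p, z} = insert v X" using 3 x z_P \<open>x \<noteq> v\<close> by auto
      then have "twins R (insert v X) x z" using twin_pz 3 by simp
      moreover have "insert v X \<subseteq> V" "x \<in> V - insert v X" "z \<in> V - insert v X"
        using X_subset x v z \<open>x \<noteq> v\<close> by auto
      ultimately have "is_prime (insert z (insert v X)) (ind R (insert z (insert v X)))"
        using is_prime_image[OF two_structure twins_swap[OF two_structure] P_prime] by blast
      then have "{z, v} \<in> gamma_edges V R X"
        unfolding gamma_edges_pair_iff using z v by blast
      then show thesis using non_edge by blast
    qed
  qed
qed

context
  fixes B x z v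
  assumes z: "z \<in> Nminus V R X B v" and x: "x \<in> Nplus V R X B v"
    and v: "v \<in> V - X - B" and B: "B \<subseteq> V - X"
begin

private lemma cross_pair_facts:
  "{x, v} \<in> gamma_edges V R X" "{z, v} \<notin> gamma_edges V R X" "z \<in> V - X" "z \<noteq> v" "v \<in> V - X"
    "z \<in> B" "x \<in> B" "v \<notin> B"
  using z x v B unfolding Nplus_def Nminus_def by auto

lemma cross_pair_not_Ext: "B \<noteq> Ext V R X"
proof
  assume B_Ext: "B = Ext V R X"
  then have "is_prime (insert z X) (ind R (insert z X))"
    using cross_pair_facts unfolding Ext_def by auto
  then have no_modules: "\<not> is_module (insert z X) (ind R (insert z X)) X"
    "\<forall>p\<in>X. \<not> is_module (insert z X) (ind R (insert z X)) {p, z}"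
    using is_prime_insert_iff[OF X_prime] cross_pair_facts by blast+
  show False
    using cross_pair_facts(1-4)
  proof (cases rule: non_edge_cases)
    case twin
    then show False
      using Ext_twin_closed[OF two_structure X_subset] B_Ext cross_pair_facts by blast
  qed (use no_modules in blast)+
qed

lemma cross_pair_angle_ef:
  assumes e: "e \<in> classes V R" and f: "f \<in> classes V R" and B_eq: "B = angle_ef V R X e f"
  shows "(z, x) \<in> e \<and> (x, z) \<in> f"
proof -
  have z_module: "is_module (insert z X) (ind R (insert z X)) X"
    and z_classes: "\<forall>\<alpha>\<in>X. (z, \<alpha>) \<in> e \<and> (\<alpha>, z) \<in> f"
    using cross_pair_facts B_eq unfolding angle_ef_def angle_def by auto
  show ?thesis
    using cross_pair_facts(1-4)
  proof (cases rule: non_edge_cases)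
    case X_module
    obtain a where "a \<in> X" using is_prime_three[OF X_prime] by blast
    then show ?thesis
      using X_module z_classes classes_closed[OF two_structure e] classes_closed[OF two_structure f]
      unfolding twins_def by blast
  next
    case (pair_module p)
    then show ?thesis
      using module_excludes_pair_module[OF two_structure X_prime _ _ z_module] cross_pair_facts by blast
  next
    case twin
    then show ?thesis
      using angle_ef_twin_closed[OF two_structure X_subset _ _ twin e f] B_eq cross_pair_facts by blast
  qed
qed

lemma cross_pair_Xalpha_ef:
  assumes \<alpha>: "\<alpha> \<in> X" and e: "e \<in> classes V R" and f: "f \<in> classes V R"
    and B_eq: "B = Xalpha_ef V R X \<alpha> e f"
  shows "(z, x) \<in> f \<and> (x, z) \<in> e"
proof -
  have z_module: "is_module (insert z X) (ind R (insert z X)) {\<alpha>, z}"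
    and x_classes: "(x, \<alpha>) \<in> e" "(\<alpha>, x) \<in> f"
    using cross_pair_facts B_eq unfolding Xalpha_ef_def Xalpha_def by auto
  show ?thesis
    using cross_pair_facts(1-4)
  proof (cases rule: non_edge_cases)
    case X_module
    then show ?thesis
      using module_excludes_pair_module[OF two_structure X_prime _ \<alpha> _ z_module] cross_pair_facts by blast
  next
    case (pair_module p)
    then have "p = \<alpha>"
      using pair_module_unique[OF two_structure X_prime _ _ _ \<alpha> z_module] cross_pair_facts by blast
    then show ?thesis
      using pair_module x_classes classes_closed[OF two_structure e] classes_closed[OF two_structure f]
      unfolding twins_def by blast
  next
    case twin
    then show ?thesis
      using Xalpha_ef_twin_closed[OF two_structure X_subset _ _ twin \<alpha> e f] B_eq cross_pair_facts by blast
  qed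
qed

end

context
  fixes B v
  assumes B: "B \<in> qpart V R X" and v: "v \<in> V - X - B"
begin

lemma cross_pairs_same_class:
  assumes "z \<in> Nminus V R X B v" "z' \<in> Nminus V R X B v" "x \<in> Nplus V R X B v" "x' \<in> Nplus V R X B v"
  shows "((z, x), (z', x')) \<in> R \<and> ((x, z), (x', z')) \<in> R"
  using B
proof (cases rule: qpart_cases)
  case Ext
  then show ?thesis using cross_pair_not_Ext[OF assms(1,3) v qpart_subset[OF B]] by blast
next
  case (angle e f)
  then have "(z, x) \<in> e" "(z', x') \<in> e" "(x, z) \<in> f" "(x', z') \<in> f"
    using cross_pair_angle_ef[OF assms(1,3) v qpart_subset[OF B] angle]
      cross_pair_angle_ef[OF assms(2,4) v qpart_subset[OF B] angle] by auto
  then show ?thesis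
    using classes_rel[OF two_structure angle(1)] classes_rel[OF two_structure angle(2)] by blast
next
  case (Xalpha \<alpha> e f)
  then have "(z, x) \<in> f" "(z', x') \<in> f" "(x, z) \<in> e" "(x', z') \<in> e"
    using cross_pair_Xalpha_ef[OF assms(1,3) v qpart_subset[OF B] Xalpha]
      cross_pair_Xalpha_ef[OF assms(2,4) v qpart_subset[OF B] Xalpha] by auto
  then show ?thesis
    using classes_rel[OF two_structure Xalpha(2)] classes_rel[OF two_structure Xalpha(3)] by blast
qed

lemma Nminus_Nplus_modules:
  "is_module B (ind R B) (Nminus V R X B v)" "is_module B (ind R B) (Nplus V R X B v)"
proof -
  have "Nminus V R X B v \<union> Nplus V R X B v = B" "Nminus V R X B v \<inter> Nplus V R X B v = {}"
    unfolding Nminus_def Nplus_def by auto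
  then show "is_module B (ind R B) (Nminus V R X B v)" "is_module B (ind R B) (Nplus V R X B v)"
    using uniform_cut_modules[of "Nminus V R X B v" "Nplus V R X B v" B R] cross_pairs_same_class
    by auto
qed

end

end

theorem corollary3p4:
  fixes V X B :: "'a set" and R :: "(('a \<times> 'a) \<times> ('a \<times> 'a)) set" and v :: 'a
  assumes "two_structure V R"
    and "X \<subset> V"
    and "is_prime X (ind R X)"
    and S3: "\<not> (\<exists>Y. Y \<subseteq> V - X \<and> card Y = 3 \<and> is_prime (X \<union> Y) (ind R (X \<union> Y)))"
    and "B \<in> qpart V R X"
    and "v \<in> (V - X) - B"
  shows "is_module B (ind R B) (Nplus V R X B v)
    \<and> is_module B (ind R B) (Nminus V R X B v)
    \<and> (Nplus V R X B v \<noteq> {} \<and> Nminus V R X B v \<noteq> {} \<longrightarrow>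
        (\<forall>e\<in>classes V R. \<forall>f\<in>classes V R. B = angle_ef V R X e f \<longrightarrow>
           (\<forall>z\<in>Nminus V R X B v. \<forall>x\<in>Nplus V R X B v. (z, x) \<in> e \<and> (x, z) \<in> f))
      \<and> (\<forall>\<alpha>\<in>X. \<forall>e\<in>classes V R. \<forall>f\<in>classes V R. B = Xalpha_ef V R X \<alpha> e f \<longrightarrow>
           (\<forall>z\<in>Nminus V R X B v. \<forall>x\<in>Nplus V R X B v. (z, x) \<in> f \<and> (x, z) \<in> e)))"
proof -
  interpret no_prime_triple_extension V R X
    using assms(1-4) by unfold_locales auto
  have B_sub: "B \<subseteq> V - X" using qpart_subset[OF assms(5)] .
  note Nminus_Nplus_modules[OF assms(5,6)]
  moreover have "\<forall>e\<in>classes V R. \<forall>f\<in>classes V R. B = angle_ef V R X e f \<longrightarrow>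
      (\<forall>z\<in>Nminus V R X B v. \<forall>x\<in>Nplus V R X B v. (z, x) \<in> e \<and> (x, z) \<in> f)"
    using cross_pair_angle_ef[OF _ _ assms(6) B_sub] by blast
  moreover have "\<forall>\<alpha>\<in>X. \<forall>e\<in>classes V R. \<forall>f\<in>classes V R. B = Xalpha_ef V R X \<alpha> e f \<longrightarrow>
      (\<forall>z\<in>Nminus V R X B v. \<forall>x\<in>Nplus V R X B v. (z, x) \<in> f \<and> (x, z) \<in> e)"
    using cross_pair_Xalpha_ef[OF _ _ assms(6) B_sub] by blast
  ultimately show ?thesis by blast
qed

end
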